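(* Let $G\in\mathcal G^3_2$, let $a\in V(G)$ with $d(a)=3$, and let $x_1,x_2$ be two distinct neighbours of $a$. Suppose that for $j=1,2$ the vertex $x_j$ belongs to a $5$-leaf $X_j$ of $G$, where $X_1$ and $X_2$ are vertex-disjoint and $a\notin V(X_1)\cup V(X_2)$. Let $G'$ be obtained from $G-\big((V(X_1)\cup V(X_2))\setminus\{x_1,x_2\}\big)$ by adding the new edge $x_1x_2$. Then $\lambda(G')\ge v(G')/4$ implies $\lambda(G)\ge v(G)/4$.
   Context: All graphs are finite and simple. For integers $1\le r\le s$, $\mathcal G^s_r$ denotes the set of graphs in which every vertex has degree at least $r$ and at most $s$. $d(x)$ is the degree of $x$ in $G$, $v(\cdot)$ the number of vertices. $\lambda(G)$ denotes the maximum number of pairwise vertex-disjoint subgraphs of $G$ each of which is a path with exactly two edges. A block of a connected graph is a maximal connected subgraph $H$ such that $H-v$ is connected for every $v\in V(H)$. A block $B$ of $G$ is an end-block if exactly one vertex of $B$ is adjacent to a vertex of $G-B$. A leaf of $G$ is a vertex of degree one or an end-block with at least two edges; a $5$-leaf is a leaf with exactly $5$ vertices. *)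

theory Defs
  imports Complex_Main
begin

definition graph :: "'a set \<Rightarrow> 'a set set \<Rightarrow> bool" where
  "graph V E \<longleftrightarrow> finite V \<and> (\<forall>e\<in>E. \<exists>u v. u \<noteq> v \<and> u \<in> V \<and> v \<in> V \<and> e = {u, v})"

definition degree :: "'a set \<Rightarrow> 'a set set \<Rightarrow> 'a \<Rightarrow> nat" where
  "degree V E x = card {y \<in> V. {x, y} \<in> E}"

definition in_Grs :: "nat \<Rightarrow> nat \<Rightarrow> 'a set \<Rightarrow> 'a set set \<Rightarrow> bool" where
  "in_Grs r s V E \<longleftrightarrow> graph V E \<and> (\<forall>x\<in>V. r \<le> degree V E x \<and> degree V E x \<le> s)"

definition subgraph :: "'a set \<Rightarrow> 'a set set \<Rightarrow> 'a set \<Rightarrow> 'a set set \<Rightarrow> bool" where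
  "subgraph VH EH V E \<longleftrightarrow> VH \<subseteq> V \<and> EH \<subseteq> E \<and> graph VH EH"

definition connected_graph :: "'a set \<Rightarrow> 'a set set \<Rightarrow> bool" where
  "connected_graph V E \<longleftrightarrow> V \<noteq> {} \<and>
     (\<forall>u\<in>V. \<forall>v\<in>V. (\<lambda>x y. {x, y} \<in> E)\<^sup>*\<^sup>* u v)"

definition del_vertex_edges :: "'a set set \<Rightarrow> 'a \<Rightarrow> 'a set set" where
  "del_vertex_edges E v = {e \<in> E. v \<notin> e}"

definition block_prop :: "'a set \<Rightarrow> 'a set set \<Rightarrow> bool" where
  "block_prop VH EH \<longleftrightarrow> connected_graph VH EH \<and>
     (\<forall>v\<in>VH. connected_graph (VH - {v}) (del_vertex_edges EH v))"

definition is_block :: "'a set \<Rightarrow> 'a set set \<Rightarrow> 'a set \<Rightarrow> 'a set set \<Rightarrow> bool" where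
  "is_block V E VB EB \<longleftrightarrow> subgraph VB EB V E \<and> block_prop VB EB \<and>
     (\<forall>VH EH. subgraph VH EH V E \<and> VB \<subseteq> VH \<and> EB \<subseteq> EH \<and> block_prop VH EH
        \<longrightarrow> VH = VB \<and> EH = EB)"

definition is_end_block :: "'a set \<Rightarrow> 'a set set \<Rightarrow> 'a set \<Rightarrow> 'a set set \<Rightarrow> bool" where
  "is_end_block V E VB EB \<longleftrightarrow> is_block V E VB EB \<and>
     card {u \<in> VB. \<exists>w \<in> V - VB. {u, w} \<in> E} = 1"

text \<open>A 5-leaf: a leaf with exactly 5 vertices; a degree-one vertex has one vertex,
  so a 5-leaf is an end-block with at least two edges and exactly 5 vertices.\<close>
definition is_5leaf :: "'a set \<Rightarrow> 'a set set \<Rightarrow> 'a set \<Rightarrow> 'a set set \<Rightarrow> bool" where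
  "is_5leaf V E VX EXX \<longleftrightarrow> is_end_block V E VX EXX \<and> card EXX \<ge> 2 \<and> card VX = 5"

definition is_P3 :: "'a set set \<Rightarrow> 'a set \<Rightarrow> 'a set set \<Rightarrow> bool" where
  "is_P3 E S T \<longleftrightarrow> (\<exists>u v w. u \<noteq> v \<and> v \<noteq> w \<and> u \<noteq> w \<and>
      S = {u, v, w} \<and> T = {{u, v}, {v, w}} \<and> T \<subseteq> E)"

definition lambda :: "'a set \<Rightarrow> 'a set set \<Rightarrow> nat" where
  "lambda V E = Max {card F | F. (\<forall>(S, T)\<in>F. S \<subseteq> V \<and> is_P3 E S T) \<and>
      (\<forall>X\<in>F. \<forall>Y\<in>F. X \<noteq> Y \<longrightarrow> fst X \<inter> fst Y = {})}"

end

theory Submission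
  imports Defs
begin

(*
  Take a maximum packing of P3s in G'. Each 5-leaf Xj is a block, so Xj - xj is a connected
  graph on four vertices and contains a P3; these two P3s avoid G'. A P3 of the packing that uses
  the new edge x1x2 has as third vertex a neighbour in G of x1 or x2 outside the leaves. Since xj
  has two neighbours inside its block and degree at most 3, that vertex is a, so this P3 can be
  rerouted as x1 a x2 on the same vertex set. Hence
  lambda(G) >= lambda(G') + 2 >= (v(G) - 8)/4 + 2 = v(G)/4.
*)

lemma is_P3_path:
  assumes "u \<noteq> v" "v \<noteq> w" "u \<noteq> w" "{u, v} \<in> E" "{v, w} \<in> E"
  shows "is_P3 E {u, v, w} {{u, v}, {v, w}}"
  using assms unfolding is_P3_def by blast

lemma is_P3_nonempty: "is_P3 E S T \<Longrightarrow> S \<noteq> {}"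
  unfolding is_P3_def by auto

lemma is_P3_edges_subset: "is_P3 E S T \<Longrightarrow> T \<subseteq> E"
  unfolding is_P3_def by auto

lemma is_P3_mono: "is_P3 E' S T \<Longrightarrow> T \<subseteq> E \<Longrightarrow> is_P3 E S T"
  unfolding is_P3_def by blast

lemma is_P3_through_edge:
  assumes "is_P3 E S T" "{u, v} \<in> T"
  shows "\<exists>y. y \<notin> {u, v} \<and> S = {u, v, y} \<and> ({u, y} \<in> T \<or> {v, y} \<in> T)"
proof -
  obtain p q r where pqr: "p \<noteq> q" "q \<noteq> r" "p \<noteq> r" "S = {p, q, r}" "T = {{p, q}, {q, r}}"
    using assms(1) unfolding is_P3_def by blast
  then consider "{u, v} = {p, q}" | "{u, v} = {q, r}" using assms(2) by blast
  then show ?thesis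
  proof cases
    case 1
    then show ?thesis using pqr by (intro exI[of _ r]) (auto simp: doubleton_eq_iff insert_commute)
  next
    case 2
    then show ?thesis using pqr by (intro exI[of _ p]) (auto simp: doubleton_eq_iff insert_commute)
  qed
qed

definition P3_packing :: "'a set \<Rightarrow> 'a set set \<Rightarrow> ('a set \<times> 'a set set) set \<Rightarrow> bool" where
  "P3_packing V E F \<longleftrightarrow> (\<forall>(S, T)\<in>F. S \<subseteq> V \<and> is_P3 E S T) \<and>
      (\<forall>X\<in>F. \<forall>Y\<in>F. X \<noteq> Y \<longrightarrow> fst X \<inter> fst Y = {})"

lemma P3_packingI:
  assumes "\<And>S T. (S, T) \<in> F \<Longrightarrow> S \<subseteq> V \<and> is_P3 E S T"
    and "\<And>X Y. X \<in> F \<Longrightarrow> Y \<in> F \<Longrightarrow> X \<noteq> Y \<Longrightarrow> fst X \<inter> fst Y = {}"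
  shows "P3_packing V E F"
  using assms unfolding P3_packing_def by auto

lemma P3_packingD:
  assumes "P3_packing V E F"
  shows "(S, T) \<in> F \<Longrightarrow> S \<subseteq> V \<and> is_P3 E S T"
    and "X \<in> F \<Longrightarrow> Y \<in> F \<Longrightarrow> X \<noteq> Y \<Longrightarrow> fst X \<inter> fst Y = {}"
  using assms unfolding P3_packing_def by auto

lemma lambda_eq_Max_P3_packing: "lambda V E = Max {card F | F. P3_packing V E F}"
  unfolding lambda_def P3_packing_def by simp

lemma P3_packing_verts_subset: "P3_packing V E F \<Longrightarrow> \<Union>(fst ` F) \<subseteq> V"
  unfolding P3_packing_def by (auto simp: case_prod_beta)

lemma P3_packing_mono: "P3_packing V E F \<Longrightarrow> V \<subseteq> V' \<Longrightarrow> P3_packing V' E F"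
  unfolding P3_packing_def by blast

lemma P3_packing_inj_on_fst: "P3_packing V E F \<Longrightarrow> inj_on fst F"
  unfolding P3_packing_def inj_on_def by (metis (no_types, lifting) case_prod_beta inf.idem is_P3_nonempty)

lemma card_P3_packing_le:
  assumes "finite V" "P3_packing V E F"
  shows "card F \<le> 2 ^ card V"
proof -
  have "card F = card (fst ` F)"
    using P3_packing_inj_on_fst[OF assms(2)] by (simp add: card_image)
  also have "\<dots> \<le> card (Pow V)"
    using assms P3_packing_verts_subset[OF assms(2)] by (intro card_mono) auto
  finally show ?thesis using assms(1) by (simp add: card_Pow)
qed

lemma P3_packing_finite:
  assumes "finite V" "P3_packing V E F"
  shows "finite F"
proof -
  have "fst ` F \<subseteq> Pow V" using P3_packing_verts_subset[OF assms(2)] by auto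
  then have "finite (fst ` F)" using assms(1) by (meson finite_Pow_iff finite_subset)
  then show ?thesis using finite_imageD P3_packing_inj_on_fst[OF assms(2)] by blast
qed

lemma finite_card_P3_packings:
  assumes "finite V"
  shows "finite {card F | F. P3_packing V E F}"
proof (rule finite_subset)
  show "{card F | F. P3_packing V E F} \<subseteq> {..2 ^ card V}"
    using card_P3_packing_le[OF assms] by auto
qed simp

lemma card_le_lambda:
  assumes "finite V" "P3_packing V E F"
  shows "card F \<le> lambda V E"
  unfolding lambda_eq_Max_P3_packing
  by (rule Max_ge[OF finite_card_P3_packings[OF assms(1)]]) (use assms(2) in blast)

lemma ex_P3_packing_card_lambda:
  assumes "finite V"
  shows "\<exists>F. P3_packing V E F \<and> card F = lambda V E"
proof -
  have "P3_packing V E {}" by (simp add: P3_packing_def)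
  then show ?thesis
    unfolding lambda_eq_Max_P3_packing
    using Max_in[OF finite_card_P3_packings[OF assms]] by fastforce
qed

lemma P3_packing_insert:
  assumes "P3_packing V E F" "S \<subseteq> V" "is_P3 E S T" "S \<inter> \<Union>(fst ` F) = {}"
  shows "P3_packing V E (insert (S, T) F)"
proof (rule P3_packingI)
  fix S' T' assume "(S', T') \<in> insert (S, T) F"
  then show "S' \<subseteq> V \<and> is_P3 E S' T'" using assms(1-3) P3_packingD(1) by blast
next
  fix X Y assume "X \<in> insert (S, T) F" "Y \<in> insert (S, T) F" "X \<noteq> Y"
  moreover have "fst Z \<inter> S = {}" "S \<inter> fst Z = {}" if "Z \<in> F" for Z
    using assms(4) that by blast+
  ultimately show "fst X \<inter> fst Y = {}" using P3_packingD(2)[OF assms(1)] by (metis fst_conv insertE)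
qed

lemma card_insert_P3_packing:
  assumes "finite V" "P3_packing V E F" "is_P3 E S T" "S \<inter> \<Union>(fst ` F) = {}"
  shows "card (insert (S, T) F) = Suc (card F)"
proof -
  have "(S, T) \<notin> F"
  proof
    assume "(S, T) \<in> F"
    then have "S \<subseteq> \<Union>(fst ` F)" by (intro Union_upper image_eqI[where x = "(S, T)"]) simp_all
    then have "S = {}" using assms(4) by blast
    then show False using is_P3_nonempty[OF assms(3)] by simp
  qed
  then show ?thesis using P3_packing_finite[OF assms(1,2)] by simp
qed

lemma P3_packing_map_edges:
  assumes "P3_packing V E F" "\<And>S T. (S, T) \<in> F \<Longrightarrow> S \<subseteq> V' \<and> is_P3 E' S (g S T)"
  shows "P3_packing V' E' ((\<lambda>(S, T). (S, g S T)) ` F)"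
proof (rule P3_packingI)
  fix S T assume "(S, T) \<in> (\<lambda>(S, T). (S, g S T)) ` F"
  then show "S \<subseteq> V' \<and> is_P3 E' S T" using assms(2) by auto
next
  fix X Y assume "X \<in> (\<lambda>(S, T). (S, g S T)) ` F" "Y \<in> (\<lambda>(S, T). (S, g S T)) ` F" "X \<noteq> Y"
  then obtain S T S' T' where "(S, T) \<in> F" "(S', T') \<in> F" "X = (S, g S T)" "Y = (S', g S' T')"
    by auto
  moreover from this have "(S, T) \<noteq> (S', T')" using \<open>X \<noteq> Y\<close> by blast
  ultimately show "fst X \<inter> fst Y = {}" using P3_packingD(2)[OF assms(1)] by fastforce
qed

lemma card_map_edges_P3_packing:
  assumes "P3_packing V E F"
  shows "card ((\<lambda>(S, T). (S, g S T)) ` F) = card F"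
proof (rule card_image, rule inj_onI)
  fix X Y assume "X \<in> F" "Y \<in> F" "(\<lambda>(S, T). (S, g S T)) X = (\<lambda>(S, T). (S, g S T)) Y"
  then have "fst X = fst Y" by (simp add: case_prod_beta)
  then show "X = Y" using inj_onD[OF P3_packing_inj_on_fst[OF assms]] \<open>X \<in> F\<close> \<open>Y \<in> F\<close> by blast
qed

lemma graph_edgeD: "graph V E \<Longrightarrow> {u, v} \<in> E \<Longrightarrow> u \<in> V \<and> v \<in> V \<and> u \<noteq> v"
  unfolding graph_def by (metis doubleton_eq_iff insert_absorb2)

lemma graph_del_vertex_edges: "graph V E \<Longrightarrow> graph (V - {v}) (del_vertex_edges E v)"
  unfolding graph_def del_vertex_edges_def by fastforce

lemma del_vertex_edges_subset: "del_vertex_edges E v \<subseteq> E"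
  unfolding del_vertex_edges_def by auto

lemma card_le_degree:
  assumes "graph V E" "N \<subseteq> V" "\<forall>y\<in>N. {x, y} \<in> E"
  shows "card N \<le> degree V E x"
  unfolding degree_def using assms by (intro card_mono) (auto simp: graph_def)

lemma ex_mem_diff_of_card_less: "finite B \<Longrightarrow> card B < card A \<Longrightarrow> \<exists>x\<in>A. x \<notin> B"
  by (meson card_mono not_le subsetI)

lemma rtranclp_enters_set:
  assumes "R\<^sup>*\<^sup>* r p" "r \<notin> A" "p \<in> A"
  shows "\<exists>s t. R s t \<and> s \<notin> A \<and> t \<in> A"
  using assms by (induction rule: rtranclp_induct) auto

lemma connected_graph_ex_neighbour:
  assumes "graph W D" "connected_graph W D" "w \<in> W" "x \<in> W" "w \<noteq> x"
  shows "\<exists>s\<in>W. s \<noteq> x \<and> {s, x} \<in> D"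
proof -
  have "(\<lambda>x y. {x, y} \<in> D)\<^sup>*\<^sup>* w x" using assms(2-4) unfolding connected_graph_def by blast
  then obtain s where "{s, x} \<in> D" "s \<noteq> x"
    using rtranclp_enters_set[of _ w x "{x}"] assms(5) by auto
  then show ?thesis using graph_edgeD[OF assms(1)] by blast
qed

lemma connected_graph_ex_P3:
  assumes "graph W D" "connected_graph W D" "3 \<le> card W"
  shows "\<exists>S T. S \<subseteq> W \<and> is_P3 D S T"
proof -
  obtain p where p: "p \<in> W"
    using ex_mem_diff_of_card_less[of "{}" W] assms(3) by auto
  obtain q where q: "q \<in> W" "q \<noteq> p"
    using ex_mem_diff_of_card_less[of "{p}" W] assms(3) by auto
  obtain s where s: "s \<in> W" "s \<noteq> p" "{s, p} \<in> D"
    using connected_graph_ex_neighbour[OF assms(1,2) q(1) p q(2)] by blast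
  have "card {p, s} \<le> 2" by (cases "p = s") simp_all
  then obtain r where r: "r \<in> W" "r \<notin> {p, s}"
    using ex_mem_diff_of_card_less[of "{p, s}" W] assms(3) by auto
  have "(\<lambda>x y. {x, y} \<in> D)\<^sup>*\<^sup>* r p" using assms(2) r(1) p unfolding connected_graph_def by blast
  from rtranclp_enters_set[OF this, of "{p, s}"] r(2)
  obtain s' t where st: "{s', t} \<in> D" "s' \<noteq> p" "s' \<noteq> s" "t \<in> {p, s}" by auto
  have "{s, p, s'} \<subseteq> W" using graph_edgeD[OF assms(1) st(1)] s p by simp
  consider "{p, s'} \<in> D" | "{s, s'} \<in> D" using st(1,4) by (auto simp: insert_commute)
  then show ?thesis
  proof cases
    case 1
    then have "is_P3 D {s, p, s'} {{s, p}, {p, s'}}" using s st by (intro is_P3_path) auto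
    then show ?thesis using \<open>{s, p, s'} \<subseteq> W\<close> by blast
  next
    case 2
    then have "is_P3 D {p, s, s'} {{p, s}, {s, s'}}"
      using s st by (intro is_P3_path) (auto simp: insert_commute)
    then show ?thesis using \<open>{s, p, s'} \<subseteq> W\<close> by (metis insert_commute)
  qed
qed

lemma block_prop_ex_two_neighbours:
  assumes "graph VB EB" "block_prop VB EB" "3 \<le> card VB" "x \<in> VB"
  shows "\<exists>u1 u2. u1 \<noteq> u2 \<and> {x, u1} \<in> EB \<and> {x, u2} \<in> EB"
proof -
  have conn: "connected_graph VB EB" "\<And>v. v \<in> VB \<Longrightarrow> connected_graph (VB - {v}) (del_vertex_edges EB v)"
    using assms(2) unfolding block_prop_def by auto
  obtain w where w: "w \<in> VB" "w \<noteq> x"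
    using ex_mem_diff_of_card_less[of "{x}" VB] assms(3) by auto
  obtain u1 where u1: "u1 \<in> VB" "u1 \<noteq> x" "{u1, x} \<in> EB"
    using connected_graph_ex_neighbour[OF assms(1) conn(1) w(1) assms(4) w(2)] by blast
  have "card {x, u1} \<le> 2" by (cases "x = u1") simp_all
  then obtain w' where w': "w' \<in> VB" "w' \<notin> {x, u1}"
    using ex_mem_diff_of_card_less[of "{x, u1}" VB] assms(3) by auto
  obtain u2 where u2: "u2 \<in> VB - {u1}" "{u2, x} \<in> del_vertex_edges EB u1"
    using connected_graph_ex_neighbour[OF graph_del_vertex_edges[OF assms(1)] conn(2)[OF u1(1)], of w' x]
      w' assms(4) u1(2) by auto
  have "{x, u1} \<in> EB" "{x, u2} \<in> EB" "u1 \<noteq> u2"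
    using u1 u2 unfolding del_vertex_edges_def by (auto simp: insert_commute)
  then show ?thesis by blast
qed

lemma is_5leafD:
  assumes "is_5leaf V E VX EY"
  shows "VX \<subseteq> V" "EY \<subseteq> E" "graph VX EY" "block_prop VX EY" "card VX = 5" "finite VX"
proof -
  have "subgraph VX EY V E" "block_prop VX EY" "card VX = 5"
    using assms unfolding is_5leaf_def is_end_block_def is_block_def by simp_all
  then show "VX \<subseteq> V" "EY \<subseteq> E" "graph VX EY" "block_prop VX EY" "card VX = 5" "finite VX"
    unfolding subgraph_def graph_def by simp_all
qed

lemma is_5leaf_ex_P3_avoiding:
  assumes "is_5leaf V E VX EY" "x \<in> VX"
  shows "\<exists>S T. S \<subseteq> VX - {x} \<and> is_P3 E S T"
proof -
  note leaf = is_5leafD[OF assms(1)]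
  have conn: "connected_graph (VX - {x}) (del_vertex_edges EY x)"
    using leaf(4) assms(2) unfolding block_prop_def by blast
  have "3 \<le> card (VX - {x})" using leaf(5,6) assms(2) by simp
  from connected_graph_ex_P3[OF graph_del_vertex_edges[OF leaf(3)] conn this]
  obtain S T where ST: "S \<subseteq> VX - {x}" "is_P3 (del_vertex_edges EY x) S T" by blast
  have "T \<subseteq> E"
    using is_P3_edges_subset[OF ST(2)] subset_trans[OF del_vertex_edges_subset leaf(2)] by (rule subset_trans)
  then show ?thesis using ST(1) is_P3_mono[OF ST(2)] by blast
qed

(* The leaf is 2-connected, so x already has two neighbours inside it. *)
lemma is_5leaf_outside_neighbour_unique:
  assumes "graph V E" "degree V E x \<le> 3" "is_5leaf V E VX EY" "x \<in> VX"
    and "{x, a} \<in> E" "{x, y} \<in> E" "a \<notin> VX" "y \<notin> VX"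
  shows "y = a"
proof (rule ccontr)
  assume "y \<noteq> a"
  note leaf = is_5leafD[OF assms(3)]
  obtain u1 u2 where u: "u1 \<noteq> u2" "{x, u1} \<in> EY" "{x, u2} \<in> EY"
    using block_prop_ex_two_neighbours[OF leaf(3,4) _ assms(4)] leaf(5) by auto
  have "u1 \<in> VX" "u2 \<in> VX" using u graph_edgeD[OF leaf(3)] by auto
  then have "a \<noteq> u1" "a \<noteq> u2" "y \<noteq> u1" "y \<noteq> u2" using assms(7,8) by auto
  then have "card {a, y, u1, u2} = 4" using u(1) \<open>y \<noteq> a\<close> by simp
  moreover have "{a, y, u1, u2} \<subseteq> V"
    using graph_edgeD[OF assms(1) assms(5)] graph_edgeD[OF assms(1) assms(6)]
      \<open>u1 \<in> VX\<close> \<open>u2 \<in> VX\<close> leaf(1) by auto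
  moreover have "\<forall>z\<in>{a, y, u1, u2}. {x, z} \<in> E" using assms(5,6) u(2,3) leaf(2) by auto
  ultimately have "4 \<le> degree V E x" using card_le_degree[OF assms(1)] by metis
  then show False using assms(2) by simp
qed

locale two_5leaves =
  fixes V :: "'a set" and E :: "'a set set" and a x1 x2 :: 'a
    and VX1 VX2 :: "'a set" and EY1 EY2 :: "'a set set"
  assumes G: "in_Grs 2 3 V E"
    and edges: "{a, x1} \<in> E" "{a, x2} \<in> E" and x1_ne_x2: "x1 \<noteq> x2"
    and X1: "is_5leaf V E VX1 EY1" "x1 \<in> VX1"
    and X2: "is_5leaf V E VX2 EY2" "x2 \<in> VX2"
    and disj: "VX1 \<inter> VX2 = {}" "a \<notin> VX1 \<union> VX2"
begin

definition V' :: "'a set" where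
  "V' = V - ((VX1 \<union> VX2) - {x1, x2})"

definition E' :: "'a set set" where
  "E' = {e \<in> E. e \<subseteq> V'} \<union> {{x1, x2}}"

lemma graph: "graph V E"
  using G unfolding in_Grs_def by simp

lemma finite_V: "finite V"
  using graph unfolding graph_def by simp

lemma card_V_eq: "card V = card V' + 8"
proof -
  let ?D = "(VX1 \<union> VX2) - {x1, x2}"
  note leaf1 = is_5leafD[OF X1(1)] and leaf2 = is_5leafD[OF X2(1)]
  have "card (VX1 \<union> VX2) = 10"
    using card_Un_disjoint[OF leaf1(6) leaf2(6) disj(1)] leaf1(5) leaf2(5) by simp
  moreover have "{x1, x2} \<subseteq> VX1 \<union> VX2" "card {x1, x2} = 2"
    using X1(2) X2(2) x1_ne_x2 by auto
  ultimately have "card ?D = 8" by (simp add: card_Diff_subset)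
  moreover have "?D \<subseteq> V" using leaf1(1) leaf2(1) by auto
  ultimately show ?thesis
    unfolding V'_def using card_Diff_subset[of ?D V] card_mono[OF finite_V, of ?D] leaf1(6) leaf2(6)
    by simp
qed

lemma outside_neighbour_eq_a:
  assumes "y \<in> V'" "y \<notin> {x1, x2}" "c \<in> {x1, x2}" "{c, y} \<in> E"
  shows "y = a"
proof -
  have "y \<notin> VX1" "y \<notin> VX2" using assms(1,2) unfolding V'_def by auto
  moreover have "degree V E x1 \<le> 3" "degree V E x2 \<le> 3"
    using G X1 X2 is_5leafD(1) unfolding in_Grs_def by blast+
  moreover have "{x1, a} \<in> E" "{x2, a} \<in> E" using edges by (simp_all add: insert_commute)
  ultimately show ?thesis
    using assms(3,4) disj(2) is_5leaf_outside_neighbour_unique[OF graph _ X1]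
      is_5leaf_outside_neighbour_unique[OF graph _ X2] by blast
qed

definition reroute :: "'a set set \<Rightarrow> 'a set set" where
  "reroute T = (if {x1, x2} \<in> T then {{x1, a}, {a, x2}} else T)"

lemma is_P3_reroute:
  assumes "S \<subseteq> V'" "is_P3 E' S T"
  shows "is_P3 E S (reroute T)"
proof (cases "{x1, x2} \<in> T")
  case True
  then obtain y where y: "y \<notin> {x1, x2}" "S = {x1, x2, y}" "{x1, y} \<in> T \<or> {x2, y} \<in> T"
    using is_P3_through_edge[OF assms(2)] by blast
  then obtain c where c: "c \<in> {x1, x2}" "{c, y} \<in> T" by blast
  have "{c, y} \<noteq> {x1, x2}" using y(1) by auto
  then have "{c, y} \<in> E" using is_P3_edges_subset[OF assms(2)] c(2) unfolding E'_def by auto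
  moreover have "y \<in> V'" using assms(1) y(2) by simp
  ultimately have "y = a" using outside_neighbour_eq_a y(1) c(1) by blast
  moreover have "a \<noteq> x1" "a \<noteq> x2" using disj(2) X1(2) X2(2) by auto
  ultimately have "is_P3 E S {{x1, a}, {a, x2}}"
    using is_P3_path[of x1 a x2 E] edges x1_ne_x2 y(2) by (simp add: insert_commute)
  then show ?thesis using True unfolding reroute_def by simp
next
  case False
  then have "T \<subseteq> E" using is_P3_edges_subset[OF assms(2)] unfolding E'_def by auto
  then show ?thesis using False is_P3_mono[OF assms(2)] unfolding reroute_def by simp
qed

lemma lambda_reduced_add_2_le: "lambda V' E' + 2 \<le> lambda V E"
proof -
  have "finite V'" unfolding V'_def using finite_V by simp
  then obtain F' where F': "P3_packing V' E' F'" "card F' = lambda V' E'"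
    using ex_P3_packing_card_lambda by blast
  define F where "F = (\<lambda>(S, T). (S, reroute T)) ` F'"
  have "P3_packing V' E F"
    unfolding F_def
    by (rule P3_packing_map_edges[OF F'(1)]) (use is_P3_reroute P3_packingD(1)[OF F'(1)] in blast)
  have "card F = lambda V' E'" unfolding F_def using card_map_edges_P3_packing[OF F'(1)] F'(2) by simp
  have "V' \<subseteq> V" unfolding V'_def by blast
  have F_V: "P3_packing V E F" using P3_packing_mono[OF \<open>P3_packing V' E F\<close> \<open>V' \<subseteq> V\<close>] .
  obtain S1 T1 where P1: "S1 \<subseteq> VX1 - {x1}" "is_P3 E S1 T1"
    using is_5leaf_ex_P3_avoiding[OF X1] by blast
  obtain S2 T2 where P2: "S2 \<subseteq> VX2 - {x2}" "is_P3 E S2 T2"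
    using is_5leaf_ex_P3_avoiding[OF X2] by blast
  have "S1 \<subseteq> V" "S2 \<subseteq> V" using P1(1) P2(1) is_5leafD(1)[OF X1(1)] is_5leafD(1)[OF X2(1)] by auto
  have disj1: "S1 \<inter> \<Union>(fst ` F) = {}" and disj2: "S2 \<inter> \<Union>(fst ` insert (S1, T1) F) = {}"
    using P3_packing_verts_subset[OF \<open>P3_packing V' E F\<close>] P1(1) P2(1) X1(2) X2(2) disj(1)
    unfolding V'_def by auto
  note F1 = P3_packing_insert[OF F_V \<open>S1 \<subseteq> V\<close> P1(2) disj1]
  have "lambda V' E' + 2 = card (insert (S2, T2) (insert (S1, T1) F))"
    using card_insert_P3_packing[OF finite_V F_V P1(2) disj1]
      card_insert_P3_packing[OF finite_V F1 P2(2) disj2] \<open>card F = lambda V' E'\<close> by simp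
  also have "\<dots> \<le> lambda V E"
    using card_le_lambda[OF finite_V P3_packing_insert[OF F1 \<open>S2 \<subseteq> V\<close> P2(2) disj2]] .
  finally show ?thesis .
qed

end

theorem lemma3p6:
  fixes V :: "'a set" and E :: "'a set set" and a x1 x2 :: 'a
    and VX1 VX2 :: "'a set" and EY1 EY2 :: "'a set set"
  assumes G: "in_Grs 2 3 V E"
    and a: "a \<in> V" "degree V E a = 3"
    and x: "{a, x1} \<in> E" "{a, x2} \<in> E" "x1 \<noteq> x2"
    and X1: "is_5leaf V E VX1 EY1" "x1 \<in> VX1"
    and X2: "is_5leaf V E VX2 EY2" "x2 \<in> VX2"
    and disj: "VX1 \<inter> VX2 = {}" "a \<notin> VX1 \<union> VX2"
    and lam: "real (lambda (V - ((VX1 \<union> VX2) - {x1, x2}))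
                 ({e \<in> E. e \<subseteq> V - ((VX1 \<union> VX2) - {x1, x2})} \<union> {{x1, x2}}))
              \<ge> real (card (V - ((VX1 \<union> VX2) - {x1, x2}))) / 4"
  shows "real (lambda V E) \<ge> real (card V) / 4"
proof -
  interpret two_5leaves V E a x1 x2 VX1 VX2 EY1 EY2
    using G x X1 X2 disj by unfold_locales
  have "real (card V') / 4 \<le> real (lambda V' E')"
    using lam unfolding V'_def E'_def .
  then show ?thesis using card_V_eq lambda_reduced_add_2_le by linarith
qed

end
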